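(* Let $n>2k$ be integers and let $A\in\mathscr F_k^5$ satisfy, for all $\alpha\in\mathscr I_{k-1}^5$, $$(n+2k-4\alpha_3-4)A_{\alpha+\vec e_3}=(n+2k-4\alpha_4-4)A_{\alpha+\vec e_4},$$ $$(n+2k-4\alpha_5-4)A_{\alpha+\vec e_5}=(n+2k-4\alpha_1-4)A_{\alpha+\vec e_1},$$ $$(n+2k-4\alpha_3-4)A_{\alpha+\vec e_3}=(n+2k-4\alpha_1-4)A_{\alpha+\vec e_1}-4(\alpha_1-\alpha_3-\alpha_4+\alpha_5)A_{\alpha+\vec e_2}.$$ Then for all $\alpha\in\mathscr I_k^5$: $$A_{\alpha_1,\alpha_2,\alpha_3,\alpha_4,\alpha_5}=A_{\alpha_1,\alpha_2,\alpha_4,\alpha_3,\alpha_5},\quad A_{\alpha_1,\alpha_2,\alpha_3,\alpha_4,\alpha_5}=A_{\alpha_5,\alpha_2,\alpha_3,\alpha_4,\alpha_1},\quad A_{\alpha_1,\alpha_2,\alpha_3,\alpha_4,\alpha_5}=A_{\alpha_3,\alpha_2,\alpha_1,\alpha_5,\alpha_4}.$$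
   Context: Notation: $\mathscr I_k^\ell:=\{\alpha\in\mathbb N_0^\ell:\alpha_1+\cdots+\alpha_\ell=k\}$; $\mathscr F_k^\ell$ is the real vector space of functions $A:\mathscr I_k^\ell\to\mathbb R$, $A_\alpha:=A(\alpha)$; $\vec e_j\in\mathbb N_0^\ell$ is the tuple with $1$ in slot $j$ and $0$ elsewhere. *)

theory Defs
  imports Main Complex_Main
begin

text \<open>An element A of F_k^5 is represented as a function of five natural-number
arguments; only its values on tuples with coordinate sum k matter.\<close>

end

theory Submission
  imports Defs
begin

text \<open>Multiplying A by the weight \<open>\<Prod>\<^sub>j (\<Prod>i<\<alpha>\<^sub>j. c i)\<close>, with
\<open>c i = n + 2k - 4i - 4\<close>, turns the first two recurrences into the statement that the
rescaled function depends only on \<open>s = \<alpha>\<^sub>1 + \<alpha>\<^sub>5\<close>, \<open>\<alpha>\<^sub>2\<close> and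
\<open>t = \<alpha>\<^sub>3 + \<alpha>\<^sub>4\<close>, and the third into
\<open>c b (E(s+1,b,t) - E(s,b,t+1)) = 4(s-t) E(s,b+1,t)\<close>.
Since \<open>s - t\<close> is antisymmetric, induction on \<open>s + t\<close> shows that
\<open>D(s,t) = E(s,b,t) - E(t,b,s)\<close> is constant along each antidiagonal; being also
antisymmetric, it vanishes. The condition \<open>n > 2k\<close> only serves to make all
\<open>c i\<close> with \<open>i < k\<close> nonzero.\<close>

lemma antidiagonal_shift_invariant:
  assumes shift: "\<And>i j. i + j + 1 = m \<Longrightarrow> f (Suc i) j = f i (Suc j)"
    and "i + j = m"
  shows "f i j = f 0 (i + j)"
  using assms(2)
proof (induction i arbitrary: j)
  case (Suc i)
  then have "f (Suc i) j = f i (Suc j)" by (intro shift) simp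
  also have "\<dots> = f 0 (Suc i + j)" using Suc by simp
  finally show ?case .
qed simp

lemma antidiagonal_antisym_zero:
  fixes D :: "nat \<Rightarrow> nat \<Rightarrow> 'a :: linordered_ab_group_add"
  assumes shift: "\<And>i j. i + j + 1 = m \<Longrightarrow> D (Suc i) j = D i (Suc j)"
    and antisym: "\<And>i j. D i j = - D j i"
    and "i + j = m"
  shows "D i j = 0"
proof -
  have "D m 0 = D 0 m"
    using antidiagonal_shift_invariant[where f = D and i = m and j = 0, OF shift] by simp
  then have "D 0 m = 0" using antisym[of 0 m] by simp
  then show ?thesis using antidiagonal_shift_invariant[where f = D, OF shift assms(3)] assms(3)
    by simp
qed

lemma symmetric_if_antisym_recurrence:
  fixes E :: "nat \<Rightarrow> nat \<Rightarrow> nat \<Rightarrow> 'a :: linordered_idom"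
  assumes c_nonzero: "\<And>b. b < k \<Longrightarrow> c b \<noteq> 0"
    and d_antisym: "\<And>s t. d s t = - d t s"
    and rec: "\<And>s b t. s + b + t + 1 = k \<Longrightarrow>
      c b * (E (Suc s) b t - E s b (Suc t)) = d s t * E s (Suc b) t"
    and "s + b + t = k"
  shows "E s b t = E t b s"
proof -
  have "\<forall>s t. s + t = m \<longrightarrow> b + m = k \<longrightarrow> E s b t = E t b s" for m b
  proof (induction m arbitrary: b)
    case (Suc m)
    show ?case
    proof (intro allI impI)
      fix s t assume st: "s + t = Suc m" and bm: "b + Suc m = k"
      define D where "D i j = E i b j - E j b i" for i j
      have "D (Suc i) j = D i (Suc j)" if "i + j + 1 = Suc m" for i j
      proof -
        have "E i (Suc b) j = E j (Suc b) i" using Suc.IH[of "Suc b"] that bm by simp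
        then have "c b * (E (Suc i) b j - E i b (Suc j)) = - (c b * (E (Suc j) b i - E j b (Suc i)))"
          using rec[of i b j] rec[of j b i] d_antisym[of i j] that bm by (simp add: add_ac)
        then have "c b * (D (Suc i) j - D i (Suc j)) = 0" by (simp add: D_def algebra_simps)
        moreover have "c b \<noteq> 0" using c_nonzero bm by simp
        ultimately show ?thesis by simp
      qed
      moreover have "D i j = - D j i" for i j by (simp add: D_def)
      ultimately have "D s t = 0" using antidiagonal_antisym_zero[of "Suc m" D] st by blast
      then show "E s b t = E t b s" by (simp add: D_def)
    qed
  qed simp
  then show ?thesis using assms(4) by auto
qed

definition weight :: "(nat \<Rightarrow> 'a :: comm_monoid_mult) \<Rightarrow> nat \<Rightarrow> nat \<Rightarrow> nat \<Rightarrow> nat \<Rightarrow> nat \<Rightarrow> 'a"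
  where "weight c a1 a2 a3 a4 a5 =
    prod c {..<a1} * prod c {..<a2} * prod c {..<a3} * prod c {..<a4} * prod c {..<a5}"

lemma weight_Suc:
  "weight c (Suc a1) a2 a3 a4 a5 = c a1 * weight c a1 a2 a3 a4 a5"
  "weight c a1 (Suc a2) a3 a4 a5 = c a2 * weight c a1 a2 a3 a4 a5"
  "weight c a1 a2 (Suc a3) a4 a5 = c a3 * weight c a1 a2 a3 a4 a5"
  "weight c a1 a2 a3 (Suc a4) a5 = c a4 * weight c a1 a2 a3 a4 a5"
  "weight c a1 a2 a3 a4 (Suc a5) = c a5 * weight c a1 a2 a3 a4 a5"
  by (simp_all add: weight_def ac_simps)

lemma weight_permute:
  "weight c a1 a2 a4 a3 a5 = weight c a1 a2 a3 a4 a5"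
  "weight c a5 a2 a3 a4 a1 = weight c a1 a2 a3 a4 a5"
  "weight c a3 a2 a1 a5 a4 = weight c a1 a2 a3 a4 a5"
  by (simp_all add: weight_def ac_simps)

lemma weight_nonzero:
  fixes c :: "nat \<Rightarrow> 'a :: semidom"
  assumes "\<And>i. i < k \<Longrightarrow> c i \<noteq> 0" and "a1 + a2 + a3 + a4 + a5 = k"
  shows "weight c a1 a2 a3 a4 a5 \<noteq> 0"
  using assms by (simp add: weight_def prod_zero_iff)

lemma depends_on_pair_sums:
  assumes shift34: "\<And>a1 a2 a3 a4 a5. a1 + a2 + a3 + a4 + a5 + 1 = k \<Longrightarrow>
      B a1 a2 (Suc a3) a4 a5 = B a1 a2 a3 (Suc a4) a5"
    and shift51: "\<And>a1 a2 a3 a4 a5. a1 + a2 + a3 + a4 + a5 + 1 = k \<Longrightarrow>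
      B a1 a2 a3 a4 (Suc a5) = B (Suc a1) a2 a3 a4 a5"
    and sum: "a1 + a2 + a3 + a4 + a5 = k"
  shows "B a1 a2 a3 a4 a5 = B 0 a2 0 (a3 + a4) (a1 + a5)"
proof -
  have "B a1 a2 a3 a4 a5 = B a1 a2 0 (a3 + a4) a5"
    by (rule antidiagonal_shift_invariant[where f = "\<lambda>i j. B a1 a2 i j a5"
          and m = "k - a1 - a2 - a5"]) (use shift34 sum in auto)
  also have "\<dots> = B 0 a2 0 (a3 + a4) (a1 + a5)"
    by (rule antidiagonal_shift_invariant[where f = "\<lambda>i j. B i a2 0 (a3 + a4) j"
          and m = "k - a2 - a3 - a4"]) (use shift51 sum in \<open>auto simp: add_ac\<close>)
  finally show ?thesis .
qed

lemma symmetric_if_pair_sum_recurrences: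
  fixes B :: "nat \<Rightarrow> nat \<Rightarrow> nat \<Rightarrow> nat \<Rightarrow> nat \<Rightarrow> real"
  assumes c_nonzero: "\<And>i. i < k \<Longrightarrow> c i \<noteq> 0"
    and shift34: "\<And>a1 a2 a3 a4 a5. a1 + a2 + a3 + a4 + a5 + 1 = k \<Longrightarrow>
      B a1 a2 (Suc a3) a4 a5 = B a1 a2 a3 (Suc a4) a5"
    and shift51: "\<And>a1 a2 a3 a4 a5. a1 + a2 + a3 + a4 + a5 + 1 = k \<Longrightarrow>
      B a1 a2 a3 a4 (Suc a5) = B (Suc a1) a2 a3 a4 a5"
    and rec31: "\<And>a1 a2 a3 a4 a5. a1 + a2 + a3 + a4 + a5 + 1 = k \<Longrightarrow>
      c a2 * B a1 a2 (Suc a3) a4 a5 = c a2 * B (Suc a1) a2 a3 a4 a5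
        - 4 * (real a1 - real a3 - real a4 + real a5) * B a1 (Suc a2) a3 a4 a5"
    and sum: "a1 + a2 + a3 + a4 + a5 = k"
  shows "B a1 a2 a4 a3 a5 = B a1 a2 a3 a4 a5 \<and> B a5 a2 a3 a4 a1 = B a1 a2 a3 a4 a5 \<and>
    B a3 a2 a1 a5 a4 = B a1 a2 a3 a4 a5"
proof -
  define E where "E s b t = B 0 b 0 t s" for s b t
  have B_E: "B a1 a2 a3 a4 a5 = E (a1 + a5) a2 (a3 + a4)" if "a1 + a2 + a3 + a4 + a5 = k"
    for a1 a2 a3 a4 a5
    using depends_on_pair_sums[where B = B, OF shift34 shift51 that] by (simp add: E_def)
  have E_rec: "c b * (E (Suc s) b t - E s b (Suc t)) = 4 * (real s - real t) * E s (Suc b) t"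
    if "s + b + t + 1 = k" for s b t
    using rec31[of s b t 0 0] B_E[of s b "Suc t" 0 0] B_E[of "Suc s" b t 0 0]
      B_E[of s "Suc b" t 0 0] that by (simp add: algebra_simps)
  have E_sym: "E s b t = E t b s" if "s + b + t = k" for s b t
    using symmetric_if_antisym_recurrence[where E = E and d = "\<lambda>s t. 4 * (real s - real t)",
        OF c_nonzero _ E_rec that] by simp
  show ?thesis
    using B_E[of a1 a2 a4 a3 a5] B_E[of a5 a2 a3 a4 a1] B_E[of a3 a2 a1 a5 a4] B_E[OF sum]
      E_sym[of "a3 + a4" a2 "a1 + a5"] sum by (simp add: ac_simps)
qed

theorem recurrence_system_symmetric:
  fixes c :: "nat \<Rightarrow> real" and A :: "nat \<Rightarrow> nat \<Rightarrow> nat \<Rightarrow> nat \<Rightarrow> nat \<Rightarrow> real"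
  assumes c_nonzero: "\<And>i. i < k \<Longrightarrow> c i \<noteq> 0"
    and rec34: "\<And>a1 a2 a3 a4 a5. a1 + a2 + a3 + a4 + a5 + 1 = k \<Longrightarrow>
      c a3 * A a1 a2 (a3 + 1) a4 a5 = c a4 * A a1 a2 a3 (a4 + 1) a5"
    and rec51: "\<And>a1 a2 a3 a4 a5. a1 + a2 + a3 + a4 + a5 + 1 = k \<Longrightarrow>
      c a5 * A a1 a2 a3 a4 (a5 + 1) = c a1 * A (a1 + 1) a2 a3 a4 a5"
    and rec31: "\<And>a1 a2 a3 a4 a5. a1 + a2 + a3 + a4 + a5 + 1 = k \<Longrightarrow>
      c a3 * A a1 a2 (a3 + 1) a4 a5 = c a1 * A (a1 + 1) a2 a3 a4 a5
        - 4 * (real a1 - real a3 - real a4 + real a5) * A a1 (a2 + 1) a3 a4 a5"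
    and sum: "a1 + a2 + a3 + a4 + a5 = k"
  shows "A a1 a2 a3 a4 a5 = A a1 a2 a4 a3 a5 \<and>
         A a1 a2 a3 a4 a5 = A a5 a2 a3 a4 a1 \<and>
         A a1 a2 a3 a4 a5 = A a3 a2 a1 a5 a4"
proof -
  define B where "B a1 a2 a3 a4 a5 = A a1 a2 a3 a4 a5 * weight c a1 a2 a3 a4 a5"
    for a1 a2 a3 a4 a5
  let ?W = "weight c"
  have B_Suc:
    "B (Suc a1) a2 a3 a4 a5 = c a1 * A (Suc a1) a2 a3 a4 a5 * ?W a1 a2 a3 a4 a5"
    "B a1 (Suc a2) a3 a4 a5 = c a2 * A a1 (Suc a2) a3 a4 a5 * ?W a1 a2 a3 a4 a5"
    "B a1 a2 (Suc a3) a4 a5 = c a3 * A a1 a2 (Suc a3) a4 a5 * ?W a1 a2 a3 a4 a5"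
    "B a1 a2 a3 (Suc a4) a5 = c a4 * A a1 a2 a3 (Suc a4) a5 * ?W a1 a2 a3 a4 a5"
    "B a1 a2 a3 a4 (Suc a5) = c a5 * A a1 a2 a3 a4 (Suc a5) * ?W a1 a2 a3 a4 a5"
    for a1 a2 a3 a4 a5 by (simp_all add: B_def weight_Suc ac_simps)
  have "B a1 a2 (Suc a3) a4 a5 = B a1 a2 a3 (Suc a4) a5"
    and "B a1 a2 a3 a4 (Suc a5) = B (Suc a1) a2 a3 a4 a5"
    and "c a2 * B a1 a2 (Suc a3) a4 a5 = c a2 * B (Suc a1) a2 a3 a4 a5
      - 4 * (real a1 - real a3 - real a4 + real a5) * B a1 (Suc a2) a3 a4 a5"
    if "a1 + a2 + a3 + a4 + a5 + 1 = k" for a1 a2 a3 a4 a5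
    using rec34[OF that] rec51[OF that] rec31[OF that]
    by (simp_all add: B_Suc) (simp add: algebra_simps)
  from symmetric_if_pair_sum_recurrences[where B = B, OF c_nonzero this sum]
  have "B a1 a2 a4 a3 a5 = B a1 a2 a3 a4 a5" "B a5 a2 a3 a4 a1 = B a1 a2 a3 a4 a5"
    "B a3 a2 a1 a5 a4 = B a1 a2 a3 a4 a5" by auto
  moreover have "?W a1 a2 a3 a4 a5 \<noteq> 0" using weight_nonzero[OF c_nonzero sum] .
  ultimately show ?thesis using weight_permute[of c a1 a2 a3 a4 a5] by (simp add: B_def)
qed

theorem lemma4p1:
  fixes n :: int and k :: nat
    and A :: "nat \<Rightarrow> nat \<Rightarrow> nat \<Rightarrow> nat \<Rightarrow> nat \<Rightarrow> real"
  assumes nk: "n > 2 * int k"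
    and h1: "\<And>a1 a2 a3 a4 a5. a1 + a2 + a3 + a4 + a5 + 1 = k \<Longrightarrow>
       (real_of_int n + 2 * real k - 4 * real a3 - 4) * A a1 a2 (a3 + 1) a4 a5
     = (real_of_int n + 2 * real k - 4 * real a4 - 4) * A a1 a2 a3 (a4 + 1) a5"
    and h2: "\<And>a1 a2 a3 a4 a5. a1 + a2 + a3 + a4 + a5 + 1 = k \<Longrightarrow>
       (real_of_int n + 2 * real k - 4 * real a5 - 4) * A a1 a2 a3 a4 (a5 + 1)
     = (real_of_int n + 2 * real k - 4 * real a1 - 4) * A (a1 + 1) a2 a3 a4 a5"
    and h3: "\<And>a1 a2 a3 a4 a5. a1 + a2 + a3 + a4 + a5 + 1 = k \<Longrightarrow>
       (real_of_int n + 2 * real k - 4 * real a3 - 4) * A a1 a2 (a3 + 1) a4 a5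
     = (real_of_int n + 2 * real k - 4 * real a1 - 4) * A (a1 + 1) a2 a3 a4 a5
       - 4 * (real a1 - real a3 - real a4 + real a5) * A a1 (a2 + 1) a3 a4 a5"
  shows "\<forall>a1 a2 a3 a4 a5. a1 + a2 + a3 + a4 + a5 = k \<longrightarrow>
           A a1 a2 a3 a4 a5 = A a1 a2 a4 a3 a5 \<and>
           A a1 a2 a3 a4 a5 = A a5 a2 a3 a4 a1 \<and>
           A a1 a2 a3 a4 a5 = A a3 a2 a1 a5 a4"
proof (intro allI impI)
  fix a1 a2 a3 a4 a5 assume sum: "a1 + a2 + a3 + a4 + a5 = k"
  define c where "c i = real_of_int n + 2 * real k - 4 * real i - 4" for i
  have "c i \<noteq> 0" if "i < k" for i
    using that nk unfolding c_def by linarith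
  moreover note h1[folded c_def] h2[folded c_def] h3[folded c_def]
  ultimately show "A a1 a2 a3 a4 a5 = A a1 a2 a4 a3 a5 \<and>
      A a1 a2 a3 a4 a5 = A a5 a2 a3 a4 a1 \<and> A a1 a2 a3 a4 a5 = A a3 a2 a1 a5 a4"
    by (rule recurrence_system_symmetric[OF _ _ _ _ sum])
qed

end
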